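(* Suppose the sequence $\{\mathcal{G}[k]\}_{k\ge0}$ satisfies the joint strong-connectivity assumption with parameter $T$. Then for every substate $j\in\{1,\dots,N\}$, under the freshness-index rules, $\tau^{(j)}_i[k]\le 2(N-1)T$ for all $k\ge (N-1)T$ and all $i\in\mathcal{V}$ (in particular these indices are finite by the preceding lemma).
   Context: Graphs. Nodes $\mathcal{V}=\{1,\dots,N\}$. At each time $k\in\mathbb{N}=\{0,1,2,\dots\}$ there is a directed graph $\mathcal{G}[k]=(\mathcal{V},\mathcal{E}[k])$; $(i,j)\in\mathcal{E}[k]$ means node $i$ can send information to node $j$ at time $k$. $\mathcal{N}_i[k]=\{l\neq i:(l,i)\in\mathcal{E}[k]\}$ is the set of neighbors of $i$ at time $k$. The union graph over an interval of times has vertex set $\mathcal{V}$ and edge set the union of the edge sets over that interval. Joint strong-connectivity assumption: there is $T\in\mathbb{N}_+=\{1,2,\dots\}$ such that for every $k\in\mathbb{N}$ the union graph over $[kT,(k+1)T)$ is strongly connected. Freshness indices. For each substate index $j\in\{1,\dots,N\}$ (node $j$ being the source node of substate $j$) and node $i$, node $i$ keeps $\tau^{(j)}_i[k]\in\{\omega\}\cup\mathbb{N}$, where $\omega$ is a special symbol. Initialization: $\tau^{(j)}_j[0]=0$, $\tau^{(j)}_i[0]=\omega$ for $i\neq j$. The source keeps $\tau^{(j)}_j[k]=0$ for all $k$. For $i\neq j$, let $\mathcal{M}^{(j)}_i[k]=\{l\in\mathcal{N}_i[k]:\tau^{(j)}_l[k]\neq\omega\}$. Case 1, $\tau^{(j)}_i[k]=\omega$: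 if $\mathcal{M}^{(j)}_i[k]\neq\emptyset$, let $u$ be any minimizer of $\tau^{(j)}_l[k]$ over $l\in\mathcal{M}^{(j)}_i[k]$ and set $\tau^{(j)}_i[k+1]=\tau^{(j)}_u[k]+1$; otherwise set $\tau^{(j)}_i[k+1]=\omega$. Case 2, $\tau^{(j)}_i[k]\neq\omega$: let $\mathcal{F}^{(j)}_i[k]=\{l\in\mathcal{M}^{(j)}_i[k]:\tau^{(j)}_l[k]<\tau^{(j)}_i[k]\}$; if nonempty, let $u$ be any minimizer of $\tau^{(j)}_l[k]$ over $\mathcal{F}^{(j)}_i[k]$ and set $\tau^{(j)}_i[k+1]=\tau^{(j)}_u[k]+1$; otherwise set $\tau^{(j)}_i[k+1]=\tau^{(j)}_i[k]+1$. *)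

theory Defs
  imports Main
begin

text \<open>A time-varying graph is E :: nat => (nat * nat) set,
  where (i,j) \<in> E k means node i can send to node j at time k.
  The special symbol omega is represented by None; a finite index n by Some n.\<close>

definition nodes :: "nat \<Rightarrow> nat set" where
  "nodes N = {1..N}"

definition neighbors :: "(nat \<times> nat) set \<Rightarrow> nat \<Rightarrow> nat set" where
  "neighbors Ek i = {l. l \<noteq> i \<and> (l, i) \<in> Ek}"

definition union_graph :: "(nat \<Rightarrow> (nat \<times> nat) set) \<Rightarrow> nat \<Rightarrow> nat \<Rightarrow> (nat \<times> nat) set" where
  "union_graph E a b = (\<Union>t\<in>{a..<b}. E t)"

definition strongly_connected :: "nat set \<Rightarrow> (nat \<times> nat) set \<Rightarrow> bool" where
  "strongly_connected V A \<longleftrightarrow> (\<forall>a\<in>V. \<forall>b\<in>V. (a, b) \<in> (A \<inter> (V \<times> V))\<^sup>*)"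

definition joint_strongly_connected :: "nat \<Rightarrow> (nat \<Rightarrow> (nat \<times> nat) set) \<Rightarrow> nat \<Rightarrow> bool" where
  "joint_strongly_connected N E T \<longleftrightarrow> T \<ge> 1 \<and>
     (\<forall>k. strongly_connected (nodes N) (union_graph E (k * T) ((k + 1) * T)))"

text \<open>One step of the freshness-index update for substate j. The value of the chosen
  minimizer u is just the minimum, so the rule is deterministic.\<close>
definition fresh_step :: "(nat \<times> nat) set \<Rightarrow> nat \<Rightarrow> (nat \<Rightarrow> nat option) \<Rightarrow> nat \<Rightarrow> nat option" where
  "fresh_step Ek j t i =
     (if i = j then Some 0 else
      (let M = {l \<in> neighbors Ek i. t l \<noteq> None} in
       case t i of
         None \<Rightarrow> (if M = {} then None
                  else Some ((LEAST n. \<exists>l\<in>M. t l = Some n) + 1))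
       | Some c \<Rightarrow>
           (let F = {l \<in> M. the (t l) < c} in
            if F = {} then Some (c + 1)
            else Some ((LEAST n. \<exists>l\<in>F. t l = Some n) + 1))))"

primrec tau :: "(nat \<Rightarrow> (nat \<times> nat) set) \<Rightarrow> nat \<Rightarrow> nat \<Rightarrow> nat \<Rightarrow> nat option" where
  "tau E j 0 = (\<lambda>i. if i = j then Some 0 else None)"
| "tau E j (Suc k) = fresh_step (E k) j (tau E j k)"

end

theory Submission
  imports Defs
begin

text \<open>A finite index n at time t means that the node holds the source's value of
  time t - n. Indices grow by at most one per step, and a node never ends up more than
  one above a neighbour's index, so the set of nodes holding information emitted no
  earlier than s only grows with t. Within a window of length T the union graph is
  strongly connected, so unless that set is everything some edge leaves it and the set
  gains a node. Hence N - 1 consecutive windows starting at a T make every node hold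
  information emitted no earlier than a T. Taking the last N - 1 full windows before k
  gives k - a T < N T, and N T \<le> 2 (N - 1) T once N \<ge> 2.\<close>

lemma fresh_step_le:
  assumes "l = i \<or> l \<in> neighbors Ek i" and "t l = Some c"
  shows "\<exists>n. fresh_step Ek j t i = Some n \<and> n \<le> Suc c"
proof (cases "i = j")
  case True
  then show ?thesis by (simp add: fresh_step_def)
next
  case False
  define M where "M = {l \<in> neighbors Ek i. t l \<noteq> None}"
  have Least_le_value: "(LEAST n. \<exists>l\<in>A. t l = Some n) \<le> d"
    if "l' \<in> A" "t l' = Some d" for A l' d
    using that by (intro Least_le) blast
  show ?thesis
  proof (cases "t i")
    case None
    then have "l \<in> M" using assms by (auto simp: M_def)
    then have "fresh_step Ek j t i = Some (Suc (LEAST n. \<exists>l\<in>M. t l = Some n))"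
      by (auto simp: fresh_step_def Let_def M_def False None)
    then show ?thesis using Least_le_value[OF \<open>l \<in> M\<close> assms(2)] by simp
  next
    case (Some c')
    define F where "F = {l \<in> M. the (t l) < c'}"
    have step: "fresh_step Ek j t i =
        (if F = {} then Some (Suc c') else Some (Suc (LEAST n. \<exists>l\<in>F. t l = Some n)))"
      by (simp only: fresh_step_def False Some if_False option.case Let_def
          M_def[symmetric] F_def[symmetric] Suc_eq_plus1)
    have "c' \<le> c" if "l \<notin> F"
      using assms that Some by (auto simp: F_def M_def)
    moreover have "(LEAST n. \<exists>l\<in>F. t l = Some n) < c'" if "F \<noteq> {}"
    proof -
      obtain l' d where "l' \<in> F" "t l' = Some d" "d < c'"
        using \<open>F \<noteq> {}\<close> by (auto simp: F_def M_def)
      then show ?thesis using Least_le_value by (meson order.strict_trans1)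
    qed
    moreover have "(LEAST n. \<exists>l\<in>F. t l = Some n) \<le> c" if "l \<in> F"
      using Least_le_value[OF that assms(2)] .
    ultimately show ?thesis unfolding step by (cases "F = {}") force+
  qed
qed

lemma tau_source: "tau E j t j = Some 0"
  by (cases t) (simp_all add: fresh_step_def)

definition informed_since :: "(nat \<Rightarrow> (nat \<times> nat) set) \<Rightarrow> nat \<Rightarrow> nat \<Rightarrow> nat \<Rightarrow> nat \<Rightarrow> bool" where
  "informed_since E j s t i \<longleftrightarrow> (\<exists>n. tau E j t i = Some n \<and> n + s \<le> t)"

lemma informed_since_source: "s \<le> t \<Longrightarrow> informed_since E j s t j"
  by (simp add: informed_since_def tau_source)

lemma informed_since_propagate:
  assumes "informed_since E j s t l" and "l = i \<or> (l, i) \<in> E t"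
  shows "informed_since E j s (Suc t) i"
proof -
  obtain n where n: "tau E j t l = Some n" "n + s \<le> t"
    using assms(1) by (auto simp: informed_since_def)
  have "l = i \<or> l \<in> neighbors (E t) i"
    using assms(2) by (auto simp: neighbors_def)
  from fresh_step_le[where t = "tau E j t" and j = j, OF this n(1)] show ?thesis
    using n(2) by (auto simp: informed_since_def)
qed

lemma informed_since_mono:
  assumes "informed_since E j s t i" and "t \<le> t'"
  shows "informed_since E j s t' i"
  using assms(2) by (induction rule: dec_induct) (auto intro: informed_since_propagate assms(1))

lemma rtrancl_leaves_set:
  assumes "(x, y) \<in> r\<^sup>*" and "x \<in> S" and "y \<notin> S"
  shows "\<exists>u v. (u, v) \<in> r \<and> u \<in> S \<and> v \<notin> S"
  using assms by (induction rule: rtrancl_induct) auto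

definition informed_set :: "(nat \<Rightarrow> (nat \<times> nat) set) \<Rightarrow> nat \<Rightarrow> nat \<Rightarrow> nat \<Rightarrow> nat \<Rightarrow> nat set" where
  "informed_set E N j s t = {i \<in> nodes N. informed_since E j s t i}"

lemma finite_informed_set: "finite (informed_set E N j s t)"
  by (simp add: informed_set_def nodes_def)

lemma informed_set_mono: "t \<le> t' \<Longrightarrow> informed_set E N j s t \<subseteq> informed_set E N j s t'"
  by (auto simp: informed_set_def intro: informed_since_mono)

lemma informed_set_grows:
  assumes conn: "strongly_connected (nodes N) (union_graph E t0 t1)"
    and j: "j \<in> nodes N" and "s \<le> t0"
    and incomplete: "informed_set E N j s t0 \<noteq> nodes N"
  shows "card (informed_set E N j s t0) < card (informed_set E N j s t1)"
proof -
  let ?R0 = "informed_set E N j s t0" and ?R1 = "informed_set E N j s t1"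
  obtain b where b: "b \<in> nodes N" "b \<notin> ?R0"
    using incomplete by (auto simp: informed_set_def)
  have "j \<in> ?R0"
    using j \<open>s \<le> t0\<close> by (simp add: informed_set_def informed_since_source)
  moreover have "(j, b) \<in> (union_graph E t0 t1 \<inter> (nodes N \<times> nodes N))\<^sup>*"
    using conn j b(1) by (simp add: strongly_connected_def)
  ultimately obtain u v where uv: "(u, v) \<in> union_graph E t0 t1 \<inter> (nodes N \<times> nodes N)"
      "u \<in> ?R0" "v \<notin> ?R0"
    using rtrancl_leaves_set[OF _ _ b(2)] by blast
  then obtain t where t: "t0 \<le> t" "t < t1" "(u, v) \<in> E t"
    by (auto simp: union_graph_def)
  have "informed_since E j s t u"
    using uv(2) t(1) by (auto simp: informed_set_def intro: informed_since_mono)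
  then have "informed_since E j s (Suc t) v"
    using t(3) by (rule informed_since_propagate[OF _ disjI2])
  then have "v \<in> ?R1"
    using uv(1) t(2) by (auto simp: informed_set_def intro: informed_since_mono)
  moreover have "?R0 \<subseteq> ?R1"
    using t by (intro informed_set_mono) simp
  ultimately have "insert v ?R0 \<subseteq> ?R1"
    by blast
  then show ?thesis
    using uv(3) finite_informed_set by (metis card_insert_disjoint card_mono Suc_le_eq)
qed

lemma card_informed_set_windows:
  assumes conn: "joint_strongly_connected N E T" and j: "j \<in> nodes N"
  shows "min N (Suc p) \<le> card (informed_set E N j (a * T) ((a + p) * T))"
proof (induction p)
  case 0
  have "j \<in> informed_set E N j (a * T) ((a + 0) * T)"
    using j by (simp add: informed_set_def informed_since_source)
  then have "0 < card (informed_set E N j (a * T) ((a + 0) * T))"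
    using finite_informed_set card_gt_0_iff by blast
  then show ?case
    by (simp add: min_le_iff_disj)
next
  case (Suc p)
  let ?R0 = "informed_set E N j (a * T) ((a + p) * T)"
    and ?R1 = "informed_set E N j (a * T) ((a + Suc p) * T)"
  show ?case
  proof (cases "?R0 = nodes N")
    case True
    moreover have "?R0 \<subseteq> ?R1"
      by (rule informed_set_mono) simp
    moreover have "?R1 \<subseteq> nodes N"
      by (auto simp: informed_set_def)
    ultimately have "?R1 = nodes N"
      by blast
    then show ?thesis by (simp add: nodes_def)
  next
    case False
    have "strongly_connected (nodes N) (union_graph E ((a + p) * T) ((a + Suc p) * T))"
      using conn by (simp add: joint_strongly_connected_def)
    from informed_set_grows[OF this j _ False] show ?thesis
      using Suc.IH by simp
  qed
qed

lemma informed_after_windows: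
  assumes conn: "joint_strongly_connected N E T" and j: "j \<in> nodes N" and i: "i \<in> nodes N"
  shows "informed_since E j (a * T) ((a + (N - 1)) * T) i"
proof -
  let ?R = "informed_set E N j (a * T) ((a + (N - 1)) * T)"
  have "N \<le> card ?R"
    using card_informed_set_windows[OF conn j, of "N - 1" a] j by (simp add: nodes_def)
  moreover have "?R \<subseteq> nodes N" and "card (nodes N) = N" and "finite (nodes N)"
    by (auto simp: informed_set_def nodes_def)
  ultimately have "?R = nodes N"
    by (metis card_seteq)
  then show ?thesis
    using i by (auto simp: informed_set_def)
qed

lemma tau_less_after_windows:
  assumes conn: "joint_strongly_connected N E T"
    and j: "j \<in> nodes N" and i: "i \<in> nodes N" and k: "(N - 1) * T \<le> k"
  shows "\<exists>n. tau E j k i = Some n \<and> n < N * T"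
proof -
  have "T \<ge> 1" and "N \<ge> 1"
    using conn j by (auto simp: joint_strongly_connected_def nodes_def)
  define a where "a = k div T - (N - 1)"
  have "N - 1 \<le> k div T"
    using div_le_mono[OF k, of T] \<open>T \<ge> 1\<close> by simp
  then have a: "a + (N - 1) = k div T"
    by (simp add: a_def)
  have "(a + (N - 1)) * T \<le> k"
    unfolding a by simp
  from informed_since_mono[OF informed_after_windows[OF conn j i] this]
  obtain n where n: "tau E j k i = Some n" "n + a * T \<le> k"
    by (auto simp: informed_since_def)
  have "a + N = k div T + 1"
    using a \<open>N \<ge> 1\<close> by linarith
  moreover have "k < k div T * T + T"
    using mod_less_divisor[of T k] div_mult_mod_eq[of k T] \<open>T \<ge> 1\<close> by linarith
  ultimately have "k < (a + N) * T"
    by simp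
  then show ?thesis
    using n by (simp add: add_mult_distrib)
qed

theorem lemma5:
  fixes N T :: nat and E :: "nat \<Rightarrow> (nat \<times> nat) set"
  assumes graph: "\<forall>k. E k \<subseteq> nodes N \<times> nodes N"
    and conn: "joint_strongly_connected N E T"
  shows "\<forall>j\<in>nodes N. \<forall>i\<in>nodes N. \<forall>k\<ge>(N - 1) * T.
           \<exists>n. tau E j k i = Some n \<and> n \<le> 2 * (N - 1) * T"
proof (intro ballI allI impI)
  fix j i k
  assume j: "j \<in> nodes N" and i: "i \<in> nodes N" and k: "(N - 1) * T \<le> k"
  show "\<exists>n. tau E j k i = Some n \<and> n \<le> 2 * (N - 1) * T"
  proof (cases "N \<ge> 2")
    case True
    obtain n where n: "tau E j k i = Some n" "n < N * T"
      using tau_less_after_windows[OF conn j i k] by blast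
    have "N * T \<le> 2 * (N - 1) * T"
      using True mult_le_mono1[of N "2 * (N - 1)" T] by linarith
    then show ?thesis
      using n by (intro exI[of _ n]) linarith
  next
    case False
    then have "i = j"
      using i j by (simp add: nodes_def)
    then show ?thesis
      by (simp add: tau_source)
  qed
qed

end
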